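(* Let $\alpha:A^{\Delta}\to(H,V)$ be a homomorphism onto a finite forest algebra with $H$ idempotent and commutative, and let $\Gamma\subseteq H$ be a reachability class. Define subsets $B_0,B_1,\ldots$ of $\Gamma\times\Gamma$ by: $B_0=\{(h,h')\in\Gamma\times\Gamma:h\neq h'\}$, and for $j\ge 0$, $B_{j+1}$ is the smallest set that contains $\{(\alpha(a)h,\alpha(a)h'):a\in A,\ (h,h')\in B_j,\ (\alpha(a)h,\alpha(a)h')\in B_0\}$ and is closed under the rules: (i) if $(h,h')\in B_{j+1}$, $g\in H$ and $(h+g,h'+g)\in B_0$ then $(h+g,h'+g)\in B_{j+1}$; (ii) if $(h,h'),(g,g')\in B_{j+1}$ and $(h+g,h'+g')\in B_0$ then $(h+g,h'+g')\in B_{j+1}$. Then for all $h,h'\in\Gamma$ with $h\ne h'$ and all $k\ge0$: $(h,h')\in B_k$ if and only if there exist forests $s,t\in H_A$ with $(s)^{\alpha_\Gamma}\sim_k(t)^{\alpha_\Gamma}$, $\alpha(s)=h$ and $\alpha(t)=h'$. Moreover $B_{k+1}\subseteq B_k$ for all $k\ge0$.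
   Context: $A^{\Delta}=(H_A,V_A)$: free forest algebra over finite alphabet $A$; $H_A$ forests (finite ordered sequences of finite ordered $A$-labelled trees) under concatenation; $V_A$ contexts (forests with one hole) acting by substitution; $as$ is the tree with root $a$ and child forest $s$. A forest algebra $(H,V)$ is an additive monoid $H$ with a monoid $V$ acting faithfully on the left, containing the maps $g\mapsto g+h$, $g\mapsto h+g$. For $a\in A$, $\alpha(a)$ is the image of the context $a\square$. Reachability: $h\le h'$ iff $h=vh'$ for some $v\in V$; a reachability class is a class of the relation ($h\le h'$ and $h'\le h$); $h>\Gamma$ means the class of $h$ is strictly above $\Gamma$. $\alpha_\Gamma:A^{\Delta}\to(H_\Gamma,V_\Gamma)$ is the quotient homomorphism identifying all elements of $\{h:h\not>\Gamma\}$ to a single absorbing element $\infty$ (forests identified iff equal values outside this set or both values in it). For a forest $s$, $s^{\alpha_\Gamma}$ is the forest over $A\times H_\Gamma$ obtained by relabeling each node whose subtree is $at$ with $(a,\alpha_\Gamma(t))$. For an alphabet $B$, $\sim_0$ identifies all forests over $B$, and for $s=b_1s_1+\cdots+b_rs_r$, $s\sim_{k+1}s'$ iff $\{(b_i,[s_i]_{\sim_k}):1\le i\le r\}$ equals the corresponding set for $s'$. *)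

theory Defs
  imports Main
begin

datatype 'a tree = Node (root: 'a) (children: "'a tree list")

type_synonym 'a forest = "'a tree list"

text \<open>A homomorphism from the free forest algebra over 'a into a forest algebra (H,V)
  (with V acting faithfully, hence a monoid of functions on H) is determined by the
  images f a of the contexts a\<box>.\<close>

fun evalT :: "('a \<Rightarrow> 'h::monoid_add \<Rightarrow> 'h) \<Rightarrow> 'a tree \<Rightarrow> 'h" where
  "evalT f (Node a ts) = f a (sum_list (map (evalT f) ts))"

definition evalF :: "('a \<Rightarrow> 'h::monoid_add \<Rightarrow> 'h) \<Rightarrow> 'a forest \<Rightarrow> 'h" where
  "evalF f s = sum_list (map (evalT f) s)"

text \<open>V: the image of the context monoid, i.e. the monoid of functions on H generated by
  the maps f a and the translations h \<mapsto> h+g, h \<mapsto> g+h.\<close>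

inductive_set Vmon :: "('a \<Rightarrow> 'h::monoid_add \<Rightarrow> 'h) \<Rightarrow> ('h \<Rightarrow> 'h) set" for f where
  V_id: "id \<in> Vmon f"
| V_letter: "f a \<in> Vmon f"
| V_addr: "(\<lambda>h. h + g) \<in> Vmon f"
| V_addl: "(\<lambda>h. g + h) \<in> Vmon f"
| V_comp: "v \<in> Vmon f \<Longrightarrow> w \<in> Vmon f \<Longrightarrow> v \<circ> w \<in> Vmon f"

definition reach :: "('a \<Rightarrow> 'h::monoid_add \<Rightarrow> 'h) \<Rightarrow> 'h \<Rightarrow> 'h \<Rightarrow> bool" where
  "reach f h h' \<longleftrightarrow> (\<exists>v \<in> Vmon f. h = v h')"

definition reach_class :: "('a \<Rightarrow> 'h::monoid_add \<Rightarrow> 'h) \<Rightarrow> 'h set \<Rightarrow> bool" where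
  "reach_class f \<Gamma> \<longleftrightarrow> (\<exists>h0. \<Gamma> = {h. reach f h h0 \<and> reach f h0 h})"

definition above :: "('a \<Rightarrow> 'h::monoid_add \<Rightarrow> 'h) \<Rightarrow> 'h set \<Rightarrow> 'h \<Rightarrow> bool" where
  "above f \<Gamma> h \<longleftrightarrow> (\<exists>g\<in>\<Gamma>. reach f g h \<and> \<not> reach f h g)"

text \<open>\<alpha>_\<Gamma> on forests: H_\<Gamma> is represented by 'h option, None being the absorbing \<infinity>.\<close>
definition alphaG :: "('a \<Rightarrow> 'h::monoid_add \<Rightarrow> 'h) \<Rightarrow> 'h set \<Rightarrow> 'a forest \<Rightarrow> 'h option" where
  "alphaG f \<Gamma> s = (if above f \<Gamma> (evalF f s) then Some (evalF f s) else None)"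

fun relabelT :: "('a forest \<Rightarrow> 'c) \<Rightarrow> 'a tree \<Rightarrow> ('a \<times> 'c) tree" where
  "relabelT g (Node a ts) = Node (a, g ts) (map (relabelT g) ts)"

definition relabelF :: "('a forest \<Rightarrow> 'c) \<Rightarrow> 'a forest \<Rightarrow> ('a \<times> 'c) forest" where
  "relabelF g s = map (relabelT g) s"

primrec simk :: "nat \<Rightarrow> 'b forest \<Rightarrow> 'b forest \<Rightarrow> bool" where
  "simk 0 s t = True"
| "simk (Suc k) s t =
     ((\<lambda>x. (root x, {u. simk k (children x) u})) ` set s =
      (\<lambda>x. (root x, {u. simk k (children x) u})) ` set t)"

definition B0 :: "'h set \<Rightarrow> ('h \<times> 'h) set" where
  "B0 \<Gamma> = {(h, h'). h \<in> \<Gamma> \<and> h' \<in> \<Gamma> \<and> h \<noteq> h'}"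

inductive_set Bstep :: "('a \<Rightarrow> 'h::monoid_add \<Rightarrow> 'h) \<Rightarrow> 'h set \<Rightarrow> ('h \<times> 'h) set \<Rightarrow> ('h \<times> 'h) set"
  for f \<Gamma> P where
  B_base: "(h, h') \<in> P \<Longrightarrow> (f a h, f a h') \<in> B0 \<Gamma> \<Longrightarrow> (f a h, f a h') \<in> Bstep f \<Gamma> P"
| B_rule1: "(h, h') \<in> Bstep f \<Gamma> P \<Longrightarrow> (h + g, h' + g) \<in> B0 \<Gamma> \<Longrightarrow> (h + g, h' + g) \<in> Bstep f \<Gamma> P"
| B_rule2: "(h, h') \<in> Bstep f \<Gamma> P \<Longrightarrow> (g, g') \<in> Bstep f \<Gamma> P \<Longrightarrow> (h + g, h' + g') \<in> B0 \<Gamma>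
            \<Longrightarrow> (h + g, h' + g') \<in> Bstep f \<Gamma> P"

primrec Bset :: "('a \<Rightarrow> 'h::monoid_add \<Rightarrow> 'h) \<Rightarrow> 'h set \<Rightarrow> nat \<Rightarrow> ('h \<times> 'h) set" where
  "Bset f \<Gamma> 0 = B0 \<Gamma>"
| "Bset f \<Gamma> (Suc j) = Bstep f \<Gamma> (Bset f \<Gamma> j)"

end

theory Submission
  imports Defs
begin

text \<open>
  B_k consists exactly of the pairs of distinct elements of \<Gamma> that are values of forests whose
  \<alpha>_\<Gamma>-relabellings are \<sim>_k-equivalent; monotonicity then follows from \<sim>_(k+1) \<subseteq> \<sim>_k.
  Each rule generating B_(k+1) is mirrored on forests: the base rule by putting a common letter on
  top of \<sim>_k-equivalent forests (their values lie in \<Gamma>, so both are labelled \<infinity>), the closure rules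
  by concatenation.
  Conversely, if the relabellings of s and t are \<sim>_(k+1)-equivalent, every tree of s is matched by a
  tree of t with the same letter and label and \<sim>_k-equivalent children, and vice versa. A matched
  pair of trees has equal values, or its children have distinct values in \<Gamma> and the pair arises by
  the base rule. As H is idempotent and commutative, the value of a forest depends only on the set
  of values of its trees, so \<alpha>(s) and \<alpha>(t) are the two sides of a sum over the matching, which
  rules (i) and (ii) assemble; the partial sums stay in \<Gamma> because they lie between an element of \<Gamma>
  and a summand in \<Gamma>.
\<close>

lemma reach_trans: "reach f a b \<Longrightarrow> reach f b c \<Longrightarrow> reach f a c"
  unfolding reach_def by (metis Vmon.V_comp comp_apply)

lemma reach_add_left: "reach f (x + y) x"
  unfolding reach_def by (rule bexI[of _ "\<lambda>h. h + y"]) (auto intro: Vmon.intros)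

lemma reach_add_right: "reach f (x + y) y"
  unfolding reach_def by (rule bexI[of _ "\<lambda>h. x + h"]) (auto intro: Vmon.intros)

lemma reach_letter: "reach f (f a x) x"
  unfolding reach_def by (rule bexI[of _ "f a"]) (auto intro: Vmon.intros)

lemma reach_sum_list: "x \<in> set xs \<Longrightarrow> reach f (sum_list xs) x"
proof (induction xs)
  case (Cons y xs)
  then show ?case
    using reach_add_left reach_add_right reach_trans by (metis set_ConsD sum_list.Cons)
qed simp

lemma reach_class_convex:
  assumes "reach_class f \<Gamma>" "a \<in> \<Gamma>" "c \<in> \<Gamma>" "reach f a b" "reach f b c"
  shows "b \<in> \<Gamma>"
  using assms reach_trans unfolding reach_class_def by blast

lemma reach_class_not_above: "reach_class f \<Gamma> \<Longrightarrow> h \<in> \<Gamma> \<Longrightarrow> \<not> above f \<Gamma> h"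
  unfolding reach_class_def above_def using reach_trans by blast

lemma reach_class_below_not_above:
  assumes "reach_class f \<Gamma>" "h \<in> \<Gamma>" "reach f h x" "\<not> above f \<Gamma> x"
  shows "x \<in> \<Gamma>"
  using assms reach_class_convex[OF assms(1,2,2,3)] unfolding above_def by blast

lemma image_eq_if_kernel_le:
  assumes "\<And>x y. F x = F y \<Longrightarrow> G x = G y" and "F ` A = F ` B"
  shows "G ` A = G ` B"
proof -
  have "G ` X \<subseteq> G ` Y" if "F ` X = F ` Y" for X Y
    using that assms(1) by (smt (verit) image_iff subsetI)
  then show ?thesis using assms(2) by (simp add: subset_antisym)
qed

lemma simk_class_eq: "simk k x y \<Longrightarrow> simk k x = simk k y"
  by (cases k) auto

lemma simk_refl: "simk k s s"
  by (cases k) auto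

lemma simk_sym: "simk k x y \<Longrightarrow> simk k y x"
  using simk_class_eq simk_refl by metis

lemma simk_of_Collect_eq: "Collect (simk k x) = Collect (simk k y) \<Longrightarrow> simk k x y"
  using simk_refl[of k y] by blast

lemma simk_SucD:
  fixes s t :: "'a forest"
  shows "simk (Suc k) s t \<Longrightarrow> simk k s t"
proof (induction k arbitrary: s t)
  case (Suc k)
  have kernel: "Collect (simk k x) = Collect (simk k y)"
    if "Collect (simk (Suc k) x) = Collect (simk (Suc k) y)" for x y :: "'a forest"
    using simk_class_eq[OF Suc.IH[OF simk_of_Collect_eq[OF that]]] by simp
  have image_eq: "(\<lambda>x. (root x, Collect (simk (Suc k) (children x)))) ` set s
      = (\<lambda>x. (root x, Collect (simk (Suc k) (children x)))) ` set t"
    using Suc.prems by (simp only: simk.simps(2)[of "Suc k"])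
  show ?case
    unfolding simk.simps(2)[of k] by (rule image_eq_if_kernel_le[OF _ image_eq]) (auto dest: kernel)
qed simp

lemma simk_append: "simk k s t \<Longrightarrow> simk k u v \<Longrightarrow> simk k (s @ u) (t @ v)"
  by (cases k) (auto simp: image_Un)

lemma evalF_append: "evalF f (s @ u) = evalF f s + evalF f u"
  unfolding evalF_def by simp

lemma evalT_Node [simp]: "evalT f (Node a ts) = f a (evalF f ts)"
  unfolding evalF_def by simp

lemma relabelF_append: "relabelF g (s @ u) = relabelF g s @ relabelF g u"
  unfolding relabelF_def by simp

lemma relabelT_Node [simp]: "relabelT g (Node a ts) = Node (a, g ts) (relabelF g ts)"
  unfolding relabelF_def by simp

declare evalT.simps [simp del] relabelT.simps [simp del]

lemma reach_evalF_tree: "x \<in> set s \<Longrightarrow> reach f (evalF f s) (evalT f x)"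
  unfolding evalF_def by (rule reach_sum_list) simp

lemma alphaG_eq_None: "reach_class f \<Gamma> \<Longrightarrow> evalF f s \<in> \<Gamma> \<Longrightarrow> alphaG f \<Gamma> s = None"
  unfolding alphaG_def using reach_class_not_above by metis

lemma alphaG_eq_cases:
  assumes "alphaG f \<Gamma> s = alphaG f \<Gamma> t"
  obtains "evalF f s = evalF f t" | "\<not> above f \<Gamma> (evalF f s)" "\<not> above f \<Gamma> (evalF f t)"
  using assms unfolding alphaG_def by (metis option.distinct(1) option.inject)

definition simk_pairs :: "('a \<Rightarrow> 'h::monoid_add \<Rightarrow> 'h) \<Rightarrow> 'h set \<Rightarrow> nat \<Rightarrow> ('h \<times> 'h) set" where
  "simk_pairs f \<Gamma> k = {(h, h'). \<exists>s t. simk k (relabelF (alphaG f \<Gamma>) s) (relabelF (alphaG f \<Gamma>) t)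
                                  \<and> evalF f s = h \<and> evalF f t = h'}"

lemma simk_pairs_0: "\<forall>h. \<exists>s. evalF f s = h \<Longrightarrow> simk_pairs f \<Gamma> 0 = UNIV"
  unfolding simk_pairs_def by auto

lemma simk_pairs_Suc_subset: "simk_pairs f \<Gamma> (Suc k) \<subseteq> simk_pairs f \<Gamma> k"
  unfolding simk_pairs_def using simk_SucD by blast

lemma simk_pairs_diag: "\<forall>h. \<exists>s. evalF f s = h \<Longrightarrow> (g, g) \<in> simk_pairs f \<Gamma> k"
  unfolding simk_pairs_def using simk_refl by blast

lemma simk_pairs_add:
  assumes "(h, h') \<in> simk_pairs f \<Gamma> k" "(g, g') \<in> simk_pairs f \<Gamma> k"
  shows "(h + g, h' + g') \<in> simk_pairs f \<Gamma> k"
proof -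
  from assms obtain s t u v where
    "simk k (relabelF (alphaG f \<Gamma>) s) (relabelF (alphaG f \<Gamma>) t)" "evalF f s = h" "evalF f t = h'"
    "simk k (relabelF (alphaG f \<Gamma>) u) (relabelF (alphaG f \<Gamma>) v)" "evalF f u = g" "evalF f v = g'"
    unfolding simk_pairs_def by blast
  then have "simk k (relabelF (alphaG f \<Gamma>) (s @ u)) (relabelF (alphaG f \<Gamma>) (t @ v))"
    "evalF f (s @ u) = h + g" "evalF f (t @ v) = h' + g'"
    by (simp_all add: relabelF_append evalF_append simk_append)
  then show ?thesis
    unfolding simk_pairs_def by blast
qed

lemma simk_pairs_letter:
  assumes "reach_class f \<Gamma>" "h \<in> \<Gamma>" "h' \<in> \<Gamma>" "(h, h') \<in> simk_pairs f \<Gamma> k"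
  shows "(f a h, f a h') \<in> simk_pairs f \<Gamma> (Suc k)"
proof -
  from assms(4) obtain s t where st:
    "simk k (relabelF (alphaG f \<Gamma>) s) (relabelF (alphaG f \<Gamma>) t)" "evalF f s = h" "evalF f t = h'"
    unfolding simk_pairs_def by blast
  moreover have "alphaG f \<Gamma> s = None" "alphaG f \<Gamma> t = None"
    using alphaG_eq_None[OF assms(1)] assms(2,3) st(2,3) by auto
  ultimately have "simk (Suc k) (relabelF (alphaG f \<Gamma>) [Node a s]) (relabelF (alphaG f \<Gamma>) [Node a t])"
    "evalF f [Node a s] = f a h" "evalF f [Node a t] = f a h'"
    using simk_class_eq[OF st(1)] by (simp_all add: evalF_def relabelF_def[of _ "[_]"])
  then show ?thesis
    unfolding simk_pairs_def by blast
qed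

lemma Bstep_subset_B0: "Bstep f \<Gamma> P \<subseteq> B0 \<Gamma>"
proof -
  have "(h, h') \<in> B0 \<Gamma>" if "(h, h') \<in> Bstep f \<Gamma> P" for h h'
    using that by (induction rule: Bstep.induct) auto
  then show ?thesis by auto
qed

lemma Bstep_subset_simk_pairs:
  assumes "reach_class f \<Gamma>" and onto: "\<forall>h. \<exists>s. evalF f s = h"
    and "P \<subseteq> B0 \<Gamma> \<inter> simk_pairs f \<Gamma> k"
  shows "Bstep f \<Gamma> P \<subseteq> simk_pairs f \<Gamma> (Suc k)"
proof (rule subsetI, clarify)
  fix h h' assume "(h, h') \<in> Bstep f \<Gamma> P"
  then show "(h, h') \<in> simk_pairs f \<Gamma> (Suc k)"
  proof (induction rule: Bstep.induct)
    case (B_base h h' a)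
    then have "h \<in> \<Gamma>" "h' \<in> \<Gamma>" "(h, h') \<in> simk_pairs f \<Gamma> k"
      using assms(3) unfolding B0_def by auto
    then show ?case by (rule simk_pairs_letter[OF assms(1)])
  next
    case (B_rule1 h h' g)
    then show ?case using simk_pairs_add simk_pairs_diag[OF onto] by metis
  next
    case (B_rule2 h h' g g')
    then show ?case using simk_pairs_add by metis
  qed
qed

lemma sum_list_eq_sum_set:
  assumes idem: "\<forall>h::'h::comm_monoid_add. h + h = h"
  shows "sum_list (xs :: 'h list) = sum id (set xs)"
proof (induction xs)
  case (Cons x xs)
  show ?case
  proof (cases "x \<in> set xs")
    case True
    then have "sum id (set xs) = x + sum id (set xs - {x})"
      by (simp add: sum.remove)
    then have "x + sum id (set xs) = sum id (set xs)"
      using idem by (simp add: add.assoc[symmetric])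
    then show ?thesis using Cons True by (simp add: insert_absorb)
  qed (use Cons in simp)
qed simp

text \<open>The offset g absorbs the pairs with equal components, so that rule (i) applies.\<close>

lemma Bstep_sum_list_pairs:
  fixes f :: "'a \<Rightarrow> 'h::comm_monoid_add \<Rightarrow> 'h"
  assumes \<Gamma>: "reach_class f \<Gamma>"
    and "\<forall>(p, q) \<in> set L. p = q \<or> (p, q) \<in> Bstep f \<Gamma> P"
    and "(sum_list (map fst L) + g, sum_list (map snd L) + g) \<in> B0 \<Gamma>"
  shows "(sum_list (map fst L) + g, sum_list (map snd L) + g) \<in> Bstep f \<Gamma> P"
  using assms(2,3)
proof (induction L arbitrary: g)
  case Nil
  then show ?case by (simp add: B0_def)
next
  case (Cons pq L)
  obtain p q where pq: "pq = (p, q)" by fastforce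
  define S where "S = sum_list (map fst L) + g"
  define S' where "S' = sum_list (map snd L) + g"
  have goal_eq: "sum_list (map fst (pq # L)) + g = p + S" "sum_list (map snd (pq # L)) + g = q + S'"
    by (simp_all add: pq S_def S'_def add.assoc)
  have in_B0: "(p + S, q + S') \<in> B0 \<Gamma>"
    using Cons.prems(2) goal_eq by simp
  have "(p + S, q + S') \<in> Bstep f \<Gamma> P"
  proof (cases "p = q")
    case True
    have "p + S = sum_list (map fst L) + (p + g)" "q + S' = sum_list (map snd L) + (p + g)"
      using True by (simp_all add: S_def S'_def add_ac)
    then show ?thesis using Cons.IH[of "p + g"] Cons.prems in_B0 by simp
  next
    case False
    then have pq_B: "(p, q) \<in> Bstep f \<Gamma> P" using Cons.prems(1) pq by simp
    show ?thesis
    proof (cases "S = S'")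
      case True
      then show ?thesis using B_rule1[OF pq_B] in_B0 by simp
    next
      case False
      have "\<exists>(p', q') \<in> set L. (p', q') \<in> Bstep f \<Gamma> P"
      proof (rule ccontr)
        assume "\<not> ?thesis"
        then have "map fst L = map snd L"
          using Cons.prems(1) by (fastforce simp: map_eq_conv)
        then show False using False unfolding S_def S'_def by metis
      qed
      then obtain p' q' where p'q': "(p', q') \<in> set L" "(p', q') \<in> Bstep f \<Gamma> P"
        by blast
      have "p' \<in> \<Gamma>" "q' \<in> \<Gamma>" "p + S \<in> \<Gamma>" "q + S' \<in> \<Gamma>"
        using p'q'(2) Bstep_subset_B0 in_B0 unfolding B0_def by auto
      moreover have "p' \<in> set (map fst L)" "q' \<in> set (map snd L)"
        using p'q'(1) by force+
      then have "reach f S p'" "reach f S' q'"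
        unfolding S_def S'_def by (metis reach_trans reach_add_left reach_sum_list)+
      ultimately have "(S, S') \<in> B0 \<Gamma>"
        using False reach_class_convex[OF \<Gamma>] reach_add_right unfolding B0_def by blast
      then have "(S, S') \<in> Bstep f \<Gamma> P"
        using Cons.IH[of g] Cons.prems(1) unfolding S_def S'_def by simp
      then show ?thesis using B_rule2[OF pq_B] in_B0 by blast
    qed
  qed
  then show ?case using goal_eq by simp
qed

lemma Bstep_sum_list_cover:
  fixes f :: "'a \<Rightarrow> 'h::comm_monoid_add \<Rightarrow> 'h"
  assumes \<Gamma>: "reach_class f \<Gamma>" and idem: "\<forall>h::'h. h + h = h"
    and xs: "\<forall>x \<in> set xs. \<exists>y \<in> set ys. x = y \<or> (x, y) \<in> Bstep f \<Gamma> P"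
    and ys: "\<forall>y \<in> set ys. \<exists>x \<in> set xs. x = y \<or> (x, y) \<in> Bstep f \<Gamma> P"
    and in_B0: "(sum_list xs, sum_list ys) \<in> B0 \<Gamma>"
  shows "(sum_list xs, sum_list ys) \<in> Bstep f \<Gamma> P"
proof -
  obtain p where p: "\<forall>x \<in> set xs. p x \<in> set ys \<and> (x = p x \<or> (x, p x) \<in> Bstep f \<Gamma> P)"
    using xs by metis
  obtain q where q: "\<forall>y \<in> set ys. q y \<in> set xs \<and> (q y = y \<or> (q y, y) \<in> Bstep f \<Gamma> P)"
    using ys by metis
  define L where "L = map (\<lambda>x. (x, p x)) xs @ map (\<lambda>y. (q y, y)) ys"
  have "set (map fst L) = set xs" "set (map snd L) = set ys"
    unfolding L_def using p q by auto
  then have "sum_list (map fst L) = sum_list xs" "sum_list (map snd L) = sum_list ys"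
    by (metis sum_list_eq_sum_set[OF idem])+
  moreover have "\<forall>(x, y) \<in> set L. x = y \<or> (x, y) \<in> Bstep f \<Gamma> P"
    unfolding L_def using p q by auto
  ultimately show ?thesis
    using Bstep_sum_list_pairs[OF \<Gamma>, of L P 0] in_B0 by simp
qed

lemma simk_Suc_relabelF_match:
  assumes sim: "simk (Suc k) (relabelF g s) (relabelF g t)" and "Node a ss \<in> set s"
  obtains tt where "Node a tt \<in> set t" "g ss = g tt" "simk k (relabelF g ss) (relabelF g tt)"
proof -
  let ?key = "\<lambda>x. (root x, Collect (simk k (children x)))"
  have "?key (relabelT g (Node a ss)) \<in> ?key ` set (relabelF g s)"
    unfolding relabelF_def set_map by (intro imageI assms(2))
  also have "?key ` set (relabelF g s) = ?key ` set (relabelF g t)"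
    using sim by (simp only: simk.simps(2))
  finally obtain y where "y \<in> set t" "?key (relabelT g (Node a ss)) = ?key (relabelT g y)"
    unfolding relabelF_def by auto
  moreover obtain b tt where "y = Node b tt" by (cases y)
  ultimately have "Node b tt \<in> set t" "a = b" "g ss = g tt"
    "Collect (simk k (relabelF g ss)) = Collect (simk k (relabelF g tt))"
    by simp_all
  then show thesis
    using that simk_of_Collect_eq by blast
qed

lemma subtree_pair_in_Bstep:
  assumes \<Gamma>: "reach_class f \<Gamma>"
    and s: "evalF f s \<in> \<Gamma>" "Node a ss \<in> set s" and t: "evalF f t \<in> \<Gamma>" "Node a tt \<in> set t"
    and alpha: "alphaG f \<Gamma> ss = alphaG f \<Gamma> tt"
    and sim: "simk k (relabelF (alphaG f \<Gamma>) ss) (relabelF (alphaG f \<Gamma>) tt)"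
  shows "evalT f (Node a ss) = evalT f (Node a tt)
    \<or> (evalT f (Node a ss), evalT f (Node a tt)) \<in> Bstep f \<Gamma> (B0 \<Gamma> \<inter> simk_pairs f \<Gamma> k)"
proof (cases "f a (evalF f ss) = f a (evalF f tt)")
  case False
  have reach_s: "reach f (evalF f s) (f a (evalF f ss))"
    and reach_t: "reach f (evalF f t) (f a (evalF f tt))"
    using reach_evalF_tree[OF s(2)] reach_evalF_tree[OF t(2)] by simp_all
  from False have "evalF f ss \<noteq> evalF f tt" by metis
  with alpha have "\<not> above f \<Gamma> (evalF f ss)" "\<not> above f \<Gamma> (evalF f tt)"
    by (cases rule: alphaG_eq_cases; blast)+
  then have ss: "evalF f ss \<in> \<Gamma>" and tt: "evalF f tt \<in> \<Gamma>"
    using reach_class_below_not_above[OF \<Gamma> s(1) reach_trans[OF reach_s reach_letter]]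
      reach_class_below_not_above[OF \<Gamma> t(1) reach_trans[OF reach_t reach_letter]]
    by blast+
  moreover have "(evalF f ss, evalF f tt) \<in> simk_pairs f \<Gamma> k"
    using sim unfolding simk_pairs_def by blast
  ultimately have P: "(evalF f ss, evalF f tt) \<in> B0 \<Gamma> \<inter> simk_pairs f \<Gamma> k"
    using \<open>evalF f ss \<noteq> evalF f tt\<close> unfolding B0_def by blast
  have "f a (evalF f ss) \<in> \<Gamma>" "f a (evalF f tt) \<in> \<Gamma>"
    using reach_class_convex[OF \<Gamma> s(1) ss reach_s reach_letter]
      reach_class_convex[OF \<Gamma> t(1) tt reach_t reach_letter] .
  with False have "(f a (evalF f ss), f a (evalF f tt)) \<in> B0 \<Gamma>"
    unfolding B0_def by simp
  then show ?thesis
    using B_base[where f = f and \<Gamma> = \<Gamma> and a = a, OF P] by simp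
qed simp

lemma simk_pairs_Suc_subset_Bstep:
  fixes f :: "'a \<Rightarrow> 'h::comm_monoid_add \<Rightarrow> 'h"
  assumes \<Gamma>: "reach_class f \<Gamma>" and idem: "\<forall>h::'h. h + h = h"
  shows "B0 \<Gamma> \<inter> simk_pairs f \<Gamma> (Suc k) \<subseteq> Bstep f \<Gamma> (B0 \<Gamma> \<inter> simk_pairs f \<Gamma> k)"
proof (rule subsetI, clarify)
  fix h h' assume in_B0: "(h, h') \<in> B0 \<Gamma>" and "(h, h') \<in> simk_pairs f \<Gamma> (Suc k)"
  then obtain s t where sim: "simk (Suc k) (relabelF (alphaG f \<Gamma>) s) (relabelF (alphaG f \<Gamma>) t)"
    and h: "evalF f s = h" and h': "evalF f t = h'"
    unfolding simk_pairs_def by blast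
  have s_in: "evalF f s \<in> \<Gamma>" and t_in: "evalF f t \<in> \<Gamma>"
    using in_B0 h h' unfolding B0_def by auto
  let ?R = "\<lambda>x y. x = y \<or> (x, y) \<in> Bstep f \<Gamma> (B0 \<Gamma> \<inter> simk_pairs f \<Gamma> k)"
  have "\<exists>y \<in> set t. ?R (evalT f x) (evalT f y)" if "x \<in> set s" for x
  proof -
    obtain a ss where x: "x = Node a ss" by (cases x)
    with that obtain tt where "Node a tt \<in> set t" "alphaG f \<Gamma> ss = alphaG f \<Gamma> tt"
      "simk k (relabelF (alphaG f \<Gamma>) ss) (relabelF (alphaG f \<Gamma>) tt)"
      using simk_Suc_relabelF_match[OF sim] by blast
    then show ?thesis using subtree_pair_in_Bstep[OF \<Gamma> s_in _ t_in] that x by blast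
  qed
  moreover have "\<exists>x \<in> set s. ?R (evalT f x) (evalT f y)" if "y \<in> set t" for y
  proof -
    obtain a tt where y: "y = Node a tt" by (cases y)
    with that obtain ss where "Node a ss \<in> set s" "alphaG f \<Gamma> tt = alphaG f \<Gamma> ss"
      "simk k (relabelF (alphaG f \<Gamma>) tt) (relabelF (alphaG f \<Gamma>) ss)"
      using simk_Suc_relabelF_match[OF simk_sym[OF sim]] by blast
    then show ?thesis using subtree_pair_in_Bstep[OF \<Gamma> s_in _ t_in] that y simk_sym by metis
  qed
  ultimately have "(sum_list (map (evalT f) s), sum_list (map (evalT f) t))
      \<in> Bstep f \<Gamma> (B0 \<Gamma> \<inter> simk_pairs f \<Gamma> k)"
    using in_B0 h h' unfolding evalF_def by (intro Bstep_sum_list_cover[OF \<Gamma> idem]) auto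
  then show "(h, h') \<in> Bstep f \<Gamma> (B0 \<Gamma> \<inter> simk_pairs f \<Gamma> k)"
    using h h' unfolding evalF_def by simp
qed

lemma Bset_eq:
  fixes f :: "'a \<Rightarrow> 'h::comm_monoid_add \<Rightarrow> 'h"
  assumes \<Gamma>: "reach_class f \<Gamma>" and onto: "\<forall>h. \<exists>s. evalF f s = h" and idem: "\<forall>h::'h. h + h = h"
  shows "Bset f \<Gamma> k = B0 \<Gamma> \<inter> simk_pairs f \<Gamma> k"
proof (induction k)
  case 0
  show ?case using simk_pairs_0[OF onto] by simp
next
  case (Suc k)
  have "Bstep f \<Gamma> (B0 \<Gamma> \<inter> simk_pairs f \<Gamma> k) = B0 \<Gamma> \<inter> simk_pairs f \<Gamma> (Suc k)"
  proof (rule subset_antisym)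
    show "Bstep f \<Gamma> (B0 \<Gamma> \<inter> simk_pairs f \<Gamma> k) \<subseteq> B0 \<Gamma> \<inter> simk_pairs f \<Gamma> (Suc k)"
      using Bstep_subset_B0 Bstep_subset_simk_pairs[OF \<Gamma> onto subset_refl] by (rule Int_greatest)
  qed (rule simk_pairs_Suc_subset_Bstep[OF \<Gamma> idem])
  then show ?case using Suc.IH by simp
qed

theorem theorem4:
  fixes f :: "'a::finite \<Rightarrow> 'h::{finite, comm_monoid_add} \<Rightarrow> 'h"
    and \<Gamma> :: "'h set"
  assumes onto: "\<forall>h. \<exists>s. evalF f s = h"
    and idem: "\<forall>h::'h. h + h = h"
    and gclass: "reach_class f \<Gamma>"
  shows "(\<forall>h h' k. h \<in> \<Gamma> \<longrightarrow> h' \<in> \<Gamma> \<longrightarrow> h \<noteq> h' \<longrightarrow>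
            ((h, h') \<in> Bset f \<Gamma> k \<longleftrightarrow>
             (\<exists>s t. simk k (relabelF (alphaG f \<Gamma>) s) (relabelF (alphaG f \<Gamma>) t)
                    \<and> evalF f s = h \<and> evalF f t = h')))
         \<and> (\<forall>k. Bset f \<Gamma> (Suc k) \<subseteq> Bset f \<Gamma> k)"
proof (intro conjI allI impI)
  fix h h' k
  assume "h \<in> \<Gamma>" "h' \<in> \<Gamma>" "h \<noteq> h'"
  then show "(h, h') \<in> Bset f \<Gamma> k \<longleftrightarrow>
      (\<exists>s t. simk k (relabelF (alphaG f \<Gamma>) s) (relabelF (alphaG f \<Gamma>) t)
             \<and> evalF f s = h \<and> evalF f t = h')"
    unfolding Bset_eq[OF gclass onto idem] B0_def simk_pairs_def by simp
next
  fix k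
  show "Bset f \<Gamma> (Suc k) \<subseteq> Bset f \<Gamma> k"
    unfolding Bset_eq[OF gclass onto idem] using simk_pairs_Suc_subset by blast
qed

end
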